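(* Let $n\ge k\ge1$, let $w,u:[n]^{(k)}\to\mathbb{R}$, and let $\tau^i=(x_iy_i)$, $i\in I$, be transpositions of $[n]$ such that the pairs $\{x_i,y_i\}$, $i\in I$, are pairwise disjoint. For $J\subseteq I$ let $\tau^J$ be the product of the $\tau^j$, $j\in J$; for $i\in I$ let $\delta(i)=\langle w,u\rangle-\langle w_{\tau^i},u\rangle$, and let $\delta(I)=\sum_{i\in I}\delta(i)$. Let $p\in[0,1]$ and let $J$ be a random subset of $I$ in which each $i\in I$ is included independently with probability $p$. Then $\mathbb{E}(\langle w,u\rangle-\langle w_{\tau^J},u\rangle)$ can be written as a polynomial in $p$ of the form $$\delta(I)p+\sum_{i=2}^kA_ip^i$$ for some real numbers $A_2,\dots,A_k$ (not depending on $p$).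
   Context: $[n]^{(k)}$ is the family of $k$-subsets of $[n]$; $\langle w,u\rangle=\sum_e w(e)u(e)$; $w_\pi(e)=w(\pi^{-1}(e))$ for a permutation $\pi$ of $[n]$. *)

theory Defs
  imports Complex_Main "HOL-Combinatorics.Transposition" "HOL-Library.FuncSet"
begin

definition ksubsets :: "nat \<Rightarrow> nat \<Rightarrow> nat set set" where
  "ksubsets n k = {e. e \<subseteq> {1..n} \<and> card e = k}"

definition inner_k :: "nat \<Rightarrow> nat \<Rightarrow> (nat set \<Rightarrow> real) \<Rightarrow> (nat set \<Rightarrow> real) \<Rightarrow> real" where
  "inner_k n k w u = (\<Sum>e\<in>ksubsets n k. w e * u e)"

definition perm_act :: "(nat \<Rightarrow> nat) \<Rightarrow> (nat set \<Rightarrow> real) \<Rightarrow> nat set \<Rightarrow> real" where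
  "perm_act \<pi> w e = w (inv \<pi> ` e)"

text \<open>The product of the transpositions (x j y j), j in J (they commute by disjointness).\<close>
definition tau_prod :: "('i \<Rightarrow> nat) \<Rightarrow> ('i \<Rightarrow> nat) \<Rightarrow> 'i set \<Rightarrow> nat \<Rightarrow> nat" where
  "tau_prod x y J = Finite_Set.fold (\<lambda>j f. transpose (x j) (y j) \<circ> f) id J"

definition exp_random_subset :: "'i set \<Rightarrow> real \<Rightarrow> ('i set \<Rightarrow> real) \<Rightarrow> real" where
  "exp_random_subset I p F = (\<Sum>J\<in>Pow I. p ^ card J * (1 - p) ^ card (I - J) * F J)"

end

theory Submission
  imports Defs
begin

text \<open>Expanding the product measure, the expectation of \<open>F J\<close> over a \<open>p\<close>-random subset \<open>J\<close> of
  \<open>I\<close> is \<open>\<Sum>K \<subseteq> I. p^|K| \<mu>F(K)\<close>, where \<open>\<mu>F(K) = \<Sum>L \<subseteq> K. (-1)^|K - L| F(L)\<close> is the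
  Moebius transform on the subset lattice; \<open>\<mu>F(K) = 0\<close> as soon as \<open>F\<close> does not depend on
  some element of \<open>K\<close>. The defect \<open>\<langle>w,u\<rangle> - \<langle>w\<^sub>\<tau>,u\<rangle>\<close> with \<open>\<tau> = \<tau>^J\<close> is a sum over
  \<open>k\<close>-sets \<open>e\<close> of terms depending only on those \<open>j \<in> J\<close> whose pair \<open>{x j, y j}\<close> meets \<open>e\<close>.
  The pairs being disjoint, every \<open>K\<close> with more than \<open>k\<close> elements contains a pair missing \<open>e\<close>,
  so only \<open>|K| \<le> k\<close> contributes; the constant term is \<open>F(\<emptyset>) = 0\<close> and the linear term is
  \<open>\<Sum>i. F({i}) = \<delta>(I)\<close>.\<close>

definition subset_moebius :: "('i set \<Rightarrow> real) \<Rightarrow> 'i set \<Rightarrow> real" where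
  "subset_moebius F K = (\<Sum>L\<in>Pow K. (-1) ^ card (K - L) * F L)"

lemma sum_Pow_insert:
  assumes "finite K" "a \<notin> K"
  shows "(\<Sum>L\<in>Pow (insert a K). h L) = (\<Sum>L\<in>Pow K. h L) + (\<Sum>L\<in>Pow K. h (insert a L))"
proof -
  have "inj_on (insert a) (Pow K)" using assms(2) by (auto simp: inj_on_def)
  moreover have "Pow K \<inter> insert a ` Pow K = {}" using assms(2) by auto
  ultimately show ?thesis
    unfolding Pow_insert using assms(1) by (simp add: sum.union_disjoint sum.reindex)
qed

lemma card_insert_diff:
  assumes "finite K" "a \<notin> K" "L \<subseteq> K"
  shows "card (insert a K - L) = Suc (card (K - L))"
proof -
  have "insert a K - L = insert a (K - L)" using assms by auto
  then show ?thesis using assms by simp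
qed

lemma card_insert_subset:
  assumes "finite K" "a \<notin> K" "L \<subseteq> K"
  shows "card (insert a L) = Suc (card L)"
  using assms by (meson card_insert_disjoint finite_subset subsetD)

lemma subset_moebius_empty [simp]: "subset_moebius F {} = F {}"
  by (simp add: subset_moebius_def)

lemma subset_moebius_singleton: "subset_moebius F {i} = F {i} - F {}"
proof -
  have "Pow {i} = {{}, {i}}" by auto
  then show ?thesis by (simp add: subset_moebius_def)
qed

lemma subset_moebius_insert:
  assumes "finite K" "a \<notin> K"
  shows "subset_moebius F (insert a K) = subset_moebius (\<lambda>L. F (insert a L)) K - subset_moebius F K"
proof -
  have "insert a K - insert a L = K - L" if "L \<subseteq> K" for L using that assms(2) by auto
  then show ?thesis unfolding subset_moebius_def
    using assms by (simp add: sum_Pow_insert card_insert_diff sum_negf algebra_simps)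
qed

lemma subset_moebius_eq_0_if_independent:
  assumes "finite K" "a \<in> K" "\<And>L. L \<subseteq> K - {a} \<Longrightarrow> F (insert a L) = F L"
  shows "subset_moebius F K = 0"
proof -
  have K: "K = insert a (K - {a})" using assms(2) by auto
  have "subset_moebius F K
      = subset_moebius (\<lambda>L. F (insert a L)) (K - {a}) - subset_moebius F (K - {a})"
    by (subst K, rule subset_moebius_insert) (use assms in auto)
  also have "subset_moebius (\<lambda>L. F (insert a L)) (K - {a}) = subset_moebius F (K - {a})"
    unfolding subset_moebius_def by (rule sum.cong) (auto simp: assms(3))
  finally show ?thesis by simp
qed

lemma subset_moebius_const:
  assumes "finite K" "K \<noteq> {}"
  shows "subset_moebius (\<lambda>_. c) K = 0"
proof -
  obtain a where "a \<in> K" using assms(2) by blast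
  with assms(1) show ?thesis by (rule subset_moebius_eq_0_if_independent) simp
qed

lemma subset_moebius_diff:
  "subset_moebius (\<lambda>L. F L - G L) K = subset_moebius F K - subset_moebius G K"
  by (simp add: subset_moebius_def right_diff_distrib sum_subtractf)

lemma subset_moebius_sum:
  "subset_moebius (\<lambda>L. \<Sum>e\<in>E. G e L) K = (\<Sum>e\<in>E. subset_moebius (G e) K)"
  unfolding subset_moebius_def sum_distrib_left by (rule sum.swap)

lemma exp_random_subset_insert:
  assumes "finite I" "a \<notin> I"
  shows "exp_random_subset (insert a I) p F
    = (1 - p) * exp_random_subset I p F + p * exp_random_subset I p (\<lambda>L. F (insert a L))"
proof -
  have diff_insert: "insert a I - insert a J = I - J" for J using assms(2) by auto
  have "exp_random_subset (insert a I) p F =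
      (\<Sum>J\<in>Pow I. p ^ card J * (1 - p) ^ card (insert a I - J) * F J)
      + (\<Sum>J\<in>Pow I. p ^ card (insert a J) * (1 - p) ^ card (insert a I - insert a J) * F (insert a J))"
    unfolding exp_random_subset_def using assms by (simp add: sum_Pow_insert)
  also have "(\<Sum>J\<in>Pow I. p ^ card J * (1 - p) ^ card (insert a I - J) * F J)
      = (1 - p) * exp_random_subset I p F"
    unfolding exp_random_subset_def sum_distrib_left
    using assms by (intro sum.cong) (simp_all add: card_insert_diff)
  also have "(\<Sum>J\<in>Pow I. p ^ card (insert a J) * (1 - p) ^ card (insert a I - insert a J) * F (insert a J))
      = p * exp_random_subset I p (\<lambda>L. F (insert a L))"
    unfolding exp_random_subset_def sum_distrib_left
    using assms by (intro sum.cong) (simp_all add: diff_insert card_insert_subset)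
  finally show ?thesis .
qed

theorem exp_random_subset_eq_subset_moebius:
  assumes "finite I"
  shows "exp_random_subset I p F = (\<Sum>K\<in>Pow I. p ^ card K * subset_moebius F K)"
  using assms
proof (induction I arbitrary: F rule: finite_induct)
  case empty
  then show ?case by (simp add: exp_random_subset_def)
next
  case (insert a I)
  have moebius_insert: "subset_moebius F (insert a K)
      = subset_moebius (\<lambda>L. F (insert a L)) K - subset_moebius F K" if "K \<subseteq> I" for K
    using that insert.hyps by (intro subset_moebius_insert) (auto intro: finite_subset)
  have "(\<Sum>K\<in>Pow (insert a I). p ^ card K * subset_moebius F K)
      = (\<Sum>K\<in>Pow I. p ^ card K * subset_moebius F K)
        + (\<Sum>K\<in>Pow I. p ^ card (insert a K) * subset_moebius F (insert a K))"
    using insert by (simp add: sum_Pow_insert)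
  also have "(\<Sum>K\<in>Pow I. p ^ card (insert a K) * subset_moebius F (insert a K))
      = p * (\<Sum>K\<in>Pow I. p ^ card K * subset_moebius (\<lambda>L. F (insert a L)) K)
        - p * (\<Sum>K\<in>Pow I. p ^ card K * subset_moebius F K)"
    unfolding sum_distrib_left sum_subtractf[symmetric]
    using insert.hyps by (intro sum.cong) (auto simp: card_insert_subset moebius_insert algebra_simps)
  finally have "(\<Sum>K\<in>Pow (insert a I). p ^ card K * subset_moebius F K)
      = (1 - p) * (\<Sum>K\<in>Pow I. p ^ card K * subset_moebius F K)
        + p * (\<Sum>K\<in>Pow I. p ^ card K * subset_moebius (\<lambda>L. F (insert a L)) K)"
    by algebra
  then show ?case
    using insert by (simp add: exp_random_subset_insert)
qed

lemma sum_Pow_by_card: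
  fixes p :: real and M :: "'i set \<Rightarrow> real"
  assumes "finite I" "\<And>K. K \<subseteq> I \<Longrightarrow> d < card K \<Longrightarrow> M K = 0"
  shows "(\<Sum>K\<in>Pow I. p ^ card K * M K)
    = (\<Sum>m\<le>d. (\<Sum>K\<in>{K\<in>Pow I. card K = m}. M K) * p ^ m)"
proof -
  have "(\<Sum>K\<in>Pow I. p ^ card K * M K)
      = (\<Sum>K\<in>Pow I. \<Sum>m\<le>d. if card K = m then M K * p ^ m else 0)"
    using assms(2) by (intro sum.cong) (auto simp: sum.delta' not_le)
  also have "\<dots> = (\<Sum>m\<le>d. \<Sum>K\<in>Pow I. if card K = m then M K * p ^ m else 0)"
    by (rule sum.swap)
  also have "\<dots> = (\<Sum>m\<le>d. (\<Sum>K\<in>{K\<in>Pow I. card K = m}. M K) * p ^ m)"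
    unfolding sum_distrib_right using assms(1)
    by (intro sum.cong refl sum.inter_filter[symmetric]) simp
  finally show ?thesis .
qed

lemma sum_card_1_subsets:
  "(\<Sum>K\<in>{K\<in>Pow I. card K = 1}. M K) = (\<Sum>i\<in>I. M {i})"
proof -
  have "{K\<in>Pow I. card K = 1} = (\<lambda>i. {i}) ` I" by (auto simp: card_1_singleton_iff)
  then show ?thesis by (simp add: sum.reindex inj_on_def)
qed

lemma sum_atMost_split_first_two:
  fixes g :: "nat \<Rightarrow> 'a::comm_monoid_add"
  assumes "1 \<le> d"
  shows "(\<Sum>m\<le>d. g m) = g 0 + g 1 + (\<Sum>m=2..d. g m)"
proof -
  have "{..d} = insert 0 (insert 1 {2..d})" using assms by auto
  then show ?thesis by (simp add: add.assoc)
qed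

theorem exp_random_subset_low_degree:
  assumes "finite I" "1 \<le> d" "F {} = 0"
    and "\<And>K. K \<subseteq> I \<Longrightarrow> d < card K \<Longrightarrow> subset_moebius F K = 0"
  shows "exp_random_subset I p F
    = (\<Sum>i\<in>I. F {i}) * p + (\<Sum>m=2..d. (\<Sum>K\<in>{K\<in>Pow I. card K = m}. subset_moebius F K) * p ^ m)"
proof -
  define c where "c m = (\<Sum>K\<in>{K\<in>Pow I. card K = m}. subset_moebius F K)" for m
  have "{K\<in>Pow I. card K = 0} = {{}}"
    using assms(1) finite_subset by fastforce
  then have c0: "c 0 = 0" by (simp add: c_def assms(3))
  have c1: "c 1 = (\<Sum>i\<in>I. F {i})"
    unfolding c_def sum_card_1_subsets by (simp add: subset_moebius_singleton assms(3))
  have "exp_random_subset I p F = (\<Sum>m\<le>d. c m * p ^ m)"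
    unfolding c_def exp_random_subset_eq_subset_moebius[OF assms(1)]
    by (rule sum_Pow_by_card[OF assms(1,4)])
  also have "\<dots> = c 0 * p ^ 0 + c 1 * p ^ 1 + (\<Sum>m=2..d. c m * p ^ m)"
    by (rule sum_atMost_split_first_two[OF assms(2)])
  finally show ?thesis unfolding c_def[symmetric] c0 c1 by simp
qed

lemma ex_pair_disjoint_from_smaller_set:
  assumes "finite e" "card e < card K" "K \<subseteq> I"
    and "\<And>i j. i \<in> I \<Longrightarrow> j \<in> I \<Longrightarrow> i \<noteq> j \<Longrightarrow> {x i, y i} \<inter> {x j, y j} = {}"
  shows "\<exists>a\<in>K. x a \<notin> e \<and> y a \<notin> e"
proof (rule ccontr)
  assume "\<not> ?thesis"
  then have hit: "\<forall>a\<in>K. x a \<in> e \<or> y a \<in> e" by blast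
  define f where "f i = (if x i \<in> e then x i else y i)" for i
  have "f i \<in> {x i, y i}" for i by (simp add: f_def)
  then have "inj_on f K"
    using assms(3,4) by (intro inj_onI) (metis disjoint_iff subsetD)
  moreover have "f ` K \<subseteq> e" using hit by (auto simp: f_def)
  ultimately have "card K \<le> card e" using card_inj_on_le assms(1) by blast
  then show False using assms(2) by simp
qed

lemma tau_prod_empty [simp]: "tau_prod x y {} = id"
  by (simp add: tau_prod_def)

lemma transpose_comp_commute:
  assumes "{a, b} \<inter> {c, d} = {}"
  shows "transpose a b \<circ> transpose c d = transpose c d \<circ> transpose a b"
  using assms by (auto simp: fun_eq_iff transpose_def)

locale disjoint_transpositions =
  fixes I :: "'i set" and x y :: "'i \<Rightarrow> nat"
  assumes disjoint: "\<And>i j. i \<in> I \<Longrightarrow> j \<in> I \<Longrightarrow> i \<noteq> j \<Longrightarrow> {x i, y i} \<inter> {x j, y j} = {}"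
begin

lemma comp_fun_commute_on_transpose:
  "comp_fun_commute_on I (\<lambda>j f. transpose (x j) (y j) \<circ> f)"
proof
  fix i j assume "i \<in> I" "j \<in> I"
  then have "transpose (x j) (y j) \<circ> transpose (x i) (y i)
      = transpose (x i) (y i) \<circ> transpose (x j) (y j)"
  proof (cases "i = j")
    case False
    with \<open>i \<in> I\<close> \<open>j \<in> I\<close> show ?thesis by (intro transpose_comp_commute disjoint) auto
  qed simp
  then show "(\<lambda>f. transpose (x j) (y j) \<circ> f) \<circ> (\<lambda>f. transpose (x i) (y i) \<circ> f)
      = (\<lambda>f. transpose (x i) (y i) \<circ> f) \<circ> (\<lambda>f. transpose (x j) (y j) \<circ> f)"
    by (simp add: fun_eq_iff comp_assoc[symmetric])
qed

lemma tau_prod_insert: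
  assumes "finite J" "J \<subseteq> I" "a \<in> I" "a \<notin> J"
  shows "tau_prod x y (insert a J) = transpose (x a) (y a) \<circ> tau_prod x y J"
  unfolding tau_prod_def
  using comp_fun_commute_on.fold_insert[OF comp_fun_commute_on_transpose] assms by auto

lemma tau_prod_singleton: "a \<in> I \<Longrightarrow> tau_prod x y {a} = transpose (x a) (y a)"
  using tau_prod_insert[of "{}" a] by simp

lemma bij_tau_prod:
  assumes "finite J" "J \<subseteq> I"
  shows "bij (tau_prod x y J)"
  using assms
proof (induction J rule: finite_induct)
  case (insert a J)
  then have "tau_prod x y (insert a J) = transpose (x a) (y a) \<circ> tau_prod x y J"
    by (simp add: tau_prod_insert)
  moreover have "bij (tau_prod x y J)" using insert by simp
  ultimately show ?case by (metis bij_comp bij_transpose)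
qed simp

lemma inv_tau_prod_insert_image:
  assumes "finite L" "L \<subseteq> I" "a \<in> I" "a \<notin> L" "x a \<notin> e" "y a \<notin> e"
  shows "inv (tau_prod x y (insert a L)) ` e = inv (tau_prod x y L) ` e"
proof -
  have "inv (tau_prod x y (insert a L)) = inv (tau_prod x y L) \<circ> transpose (x a) (y a)"
    using assms by (simp add: tau_prod_insert o_inv_distrib bij_tau_prod)
  moreover have "transpose (x a) (y a) ` e = e"
    using assms(5,6) by (auto simp: transpose_def image_iff)
  ultimately show ?thesis by (metis image_comp)
qed

lemma subset_moebius_inv_tau_prod_image:
  assumes "finite e" "card e < card K" "K \<subseteq> I"
  shows "subset_moebius (\<lambda>L. g (inv (tau_prod x y L) ` e)) K = 0"
proof -
  obtain a where a: "a \<in> K" "x a \<notin> e" "y a \<notin> e"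
    using ex_pair_disjoint_from_smaller_set[OF assms] disjoint by blast
  have "finite K" using assms(2) card.infinite by fastforce
  then show ?thesis
  proof (rule subset_moebius_eq_0_if_independent[OF _ \<open>a \<in> K\<close>])
    fix L assume L: "L \<subseteq> K - {a}"
    then have "finite L" "L \<subseteq> I" "a \<in> I" "a \<notin> L"
      using \<open>finite K\<close> finite_subset a(1) assms(3) by auto
    with a show "g (inv (tau_prod x y (insert a L)) ` e) = g (inv (tau_prod x y L) ` e)"
      by (simp add: inv_tau_prod_insert_image)
  qed
qed

lemma subset_moebius_permuted_sum_eq_0:
  assumes "K \<subseteq> I" "finite K" "K \<noteq> {}" "\<And>e. e \<in> E \<Longrightarrow> finite e \<and> card e < card K"
  shows "subset_moebius (\<lambda>J. c - (\<Sum>e\<in>E. g e (inv (tau_prod x y J) ` e))) K = 0"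
  using assms by (simp add: subset_moebius_diff subset_moebius_sum subset_moebius_const
      subset_moebius_inv_tau_prod_image)

end

theorem lemma4p4:
  fixes n k :: nat and w u :: "nat set \<Rightarrow> real"
    and I :: "'i set" and x y :: "'i \<Rightarrow> nat"
  assumes "1 \<le> k" and "k \<le> n"
    and "\<And>i. i \<in> I \<Longrightarrow> x i \<in> {1..n} \<and> y i \<in> {1..n} \<and> x i \<noteq> y i"
    and "\<And>i j. i \<in> I \<Longrightarrow> j \<in> I \<Longrightarrow> i \<noteq> j \<Longrightarrow> {x i, y i} \<inter> {x j, y j} = {}"
  shows "\<exists>A :: nat \<Rightarrow> real. \<forall>p \<in> {0..1::real}.
    exp_random_subset I p
      (\<lambda>J. inner_k n k w u - inner_k n k (perm_act (tau_prod x y J) w) u)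
    = (\<Sum>i\<in>I. inner_k n k w u - inner_k n k (perm_act (transpose (x i) (y i)) w) u) * p
      + (\<Sum>i=2..k. A i * p ^ i)"
proof (cases "finite I")
  case False
  \<comment> \<open>both sides are sums over infinite sets, hence \<open>0\<close>\<close>
  then show ?thesis by (intro exI[of _ "\<lambda>_. 0"]) (simp add: exp_random_subset_def)
next
  case True
  interpret disjoint_transpositions I x y using assms(4) by unfold_locales
  define F where "F = (\<lambda>J. inner_k n k w u - inner_k n k (perm_act (tau_prod x y J) w) u)"
  have F_eq: "F = (\<lambda>J. inner_k n k w u
      - (\<Sum>e\<in>ksubsets n k. (\<lambda>s. w s * u e) (inv (tau_prod x y J) ` e)))"
    by (simp add: F_def inner_k_def perm_act_def)
  have "perm_act id w = w" by (simp add: fun_eq_iff perm_act_def)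
  then have "F {} = 0" by (simp add: F_def)
  moreover have "subset_moebius F K = 0" if "K \<subseteq> I" "k < card K" for K
    unfolding F_eq using that card_gt_0_iff[of K]
    by (intro subset_moebius_permuted_sum_eq_0) (auto simp: ksubsets_def intro: finite_subset)
  ultimately have low_degree: "exp_random_subset I p F = (\<Sum>i\<in>I. F {i}) * p
      + (\<Sum>m=2..k. (\<Sum>K\<in>{K\<in>Pow I. card K = m}. subset_moebius F K) * p ^ m)" for p
    by (rule exp_random_subset_low_degree[OF True assms(1)])
  have linear_coefficient: "(\<Sum>i\<in>I. inner_k n k w u - inner_k n k (perm_act (transpose (x i) (y i)) w) u)
      = (\<Sum>i\<in>I. F {i})"
    by (rule sum.cong) (simp_all add: F_def tau_prod_singleton)
  show ?thesis
    unfolding F_def[symmetric] linear_coefficient by (intro exI ballI) (rule low_degree)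
qed

end
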